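(* For every $v\in\mathcal{K}\setminus\mathcal{Y}_{\mu_1}$ and every $w\in C_v^+\cap\mathcal{K}$ with $w\neq v$, we have $\nabla f_0(w)\cdot(w-v)>0$.
   Context: $\mathcal{K}\subset\mathbb{R}^q$ is an open, bounded, convex set with $0\in\mathcal{K}$. $f:\mathcal{K}\to\mathbb{R}$ is $C^2$ with $D^2f\ge -MI_q$ ($M\ge0$) and $f(v)\to\infty$ as $v\to\partial\mathcal{K}$, $v\in\mathcal{K}$; set $f_0(v)=f(v)+\frac M2|v|^2$, a convex $C^2$ function on $\mathcal{K}$ tending to $\infty$ at $\partial\mathcal{K}$. Let $g:\mathbb{S}^{q-1}\to(0,\infty)$ be the Lipschitz function such that $\nu\mapsto g(\nu)\nu$ parametrizes $\partial\mathcal{K}$, and $m_2=\sup g$. Define $G(x)=g(x/|x|)x$ for $x\ne0$, $G(0)=0$, on $\overline{B_1(0)}$, and $\mathcal{Y}_\mu=G(B_\mu(0))$ for $0<\mu<1$. Fix $r_0>0$ and $0<\mu_0<1$ with $\overline{B_{r_0}(0)}\subset\mathcal{Y}_{\mu_0}$. Let $s_0=\max\{f_0(v):v\in\partial B_{r_0}(0)\}$ and fix $\mu_1\in(\mu_0,1)$ such that $f_0(v)\ge 1+s_0$ for all $v\in\mathcal{K}\setminus\mathcal{Y}_{\mu_1}$. Cones: for $v\in\mathcal{K}\setminus\overline{B_{r_0}(0)}$, $C_v^-$ is the closed (solid) half-cone with vertex $v$, axis the ray from $v$ through $0$, and half-aperture $\alpha(v)\in(0,\pi/2)$ with $\sin\alpha(v)=r_0/|v|$;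 $C_v^+=\{v+\xi:\ v-\xi\in C_v^-\}$ is its reflection through $v$. *)

theory Defs
  imports "HOL-Analysis.Analysis"
begin

definition radialG :: "('a::euclidean_space \<Rightarrow> real) \<Rightarrow> 'a \<Rightarrow> 'a" where
  "radialG g x = (if x = 0 then 0 else g (x /\<^sub>R norm x) *\<^sub>R x)"

definition Yset :: "('a::euclidean_space \<Rightarrow> real) \<Rightarrow> real \<Rightarrow> 'a set" where
  "Yset g \<mu> = radialG g ` ball 0 \<mu>"

definition cone_angle :: "real \<Rightarrow> 'a::euclidean_space \<Rightarrow> real" where
  "cone_angle r0 v = arcsin (r0 / norm v)"

text \<open>Closed solid half-cone with vertex v, axis the ray from v through 0,
  half-aperture alpha(v): points v + xi with xi = 0 or angle(xi, -v) \<le> alpha(v).\<close>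
definition cone_minus :: "real \<Rightarrow> 'a::euclidean_space \<Rightarrow> 'a set" where
  "cone_minus r0 v = {v + \<xi> | \<xi>. \<xi> \<bullet> (- v) \<ge> norm \<xi> * norm v * cos (cone_angle r0 v)}"

definition cone_plus :: "real \<Rightarrow> 'a::euclidean_space \<Rightarrow> 'a set" where
  "cone_plus r0 v = {v + \<xi> | \<xi>. v - \<xi> \<in> cone_minus r0 v}"

end

theory Submission
  imports Defs
begin

text \<open>The half-aperture of \<open>C\<^sub>v\<^sup>-\<close> is chosen so that its rays are exactly the rays from
  \<open>v\<close> meeting the ball of radius \<open>r\<^sub>0\<close>. Hence for \<open>w \<in> C\<^sub>v\<^sup>+\<close> the line from \<open>w\<close> through
  \<open>v\<close>, continued beyond \<open>v\<close>, meets the sphere \<open>|u| = r\<^sub>0\<close>, so \<open>v\<close> lies strictly between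
  \<open>u\<close> and \<open>w\<close>. As \<open>v\<close> lies outside \<open>Y\<^sub>\<mu>\<^sub>1\<close>, \<open>f\<^sub>0 u \<le> s\<^sub>0 < f\<^sub>0 v\<close>; and a convex function
  that increases from \<open>u\<close> to \<open>v\<close> has positive slope at \<open>w\<close> in the direction \<open>w - v\<close>.\<close>

lemma Yset_mono: "\<mu> \<le> \<mu>' \<Longrightarrow> Yset g \<mu> \<subseteq> Yset g \<mu>'"
  unfolding Yset_def by (intro image_mono subset_ball)

lemma Yset_subset:
  fixes K :: "'a::euclidean_space set"
  assumes "open K" "convex K" "0 \<in> K"
    and g_pos: "\<And>\<nu>. \<nu> \<in> sphere 0 1 \<Longrightarrow> g \<nu> > 0"
    and g_param: "frontier K = (\<lambda>\<nu>. g \<nu> *\<^sub>R \<nu>) ` sphere 0 1"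
    and "\<mu> \<le> 1"
  shows "Yset g \<mu> \<subseteq> K"
proof
  fix y assume "y \<in> Yset g \<mu>"
  then obtain x where x: "norm x < \<mu>" and y: "y = radialG g x"
    unfolding Yset_def by auto
  show "y \<in> K"
  proof (cases "x = 0")
    case True
    then show ?thesis using y \<open>0 \<in> K\<close> by (simp add: radialG_def)
  next
    case False
    define \<nu> where "\<nu> = x /\<^sub>R norm x"
    have \<nu>: "\<nu> \<in> sphere 0 1" using False by (simp add: \<nu>_def)
    define b where "b = g \<nu> *\<^sub>R \<nu>"
    have "b \<in> closure K" using g_param \<nu> by (auto simp: b_def frontier_def)
    moreover have "b \<noteq> 0" using g_pos[OF \<nu>] \<nu> by (auto simp: b_def)
    moreover have "0 < norm x" "norm x < 1" using False x \<open>\<mu> \<le> 1\<close> by auto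
    moreover have "y = norm x *\<^sub>R b" using False by (simp add: y radialG_def b_def \<nu>_def)
    ultimately have "y \<in> open_segment 0 b"
      by (auto simp: in_segment)
    moreover have "0 \<in> interior K" using assms(1,3) by (simp add: interior_open)
    ultimately show ?thesis
      using in_interior_closure_convex_segment[OF \<open>convex K\<close> _ \<open>b \<in> closure K\<close>] interior_subset
      by blast
  qed
qed

lemma mem_translate_iff: "w \<in> {v + \<xi> | \<xi>. P \<xi>} \<longleftrightarrow> P (w - v)"
  for v w :: "'a::ab_group_add"
  by (auto intro: exI[of _ "w - v"])

lemma mem_cone_plus_iff:
  "w \<in> cone_plus r v \<longleftrightarrow> (w - v) \<bullet> v \<ge> norm (w - v) * norm v * cos (cone_angle r v)"
  unfolding cone_plus_def cone_minus_def mem_translate_iff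
  by (simp add: norm_minus_commute inner_diff_left)

lemma cone_plus_inner_bounds:
  fixes v w :: "'a::euclidean_space"
  assumes "0 < r" "r < norm v" "w \<in> cone_plus r v" "w \<noteq> v"
  shows "(w - v) \<bullet> v > 0" "(norm (w - v))\<^sup>2 * ((norm v)\<^sup>2 - r\<^sup>2) \<le> ((w - v) \<bullet> v)\<^sup>2"
proof -
  define x where "x = r / norm v"
  have "norm v > 0" using assms(1,2) by linarith
  then have x: "0 < x" "x < 1" using assms(1,2) by (auto simp: x_def field_simps)
  have cos_eq: "cos (cone_angle r v) = sqrt (1 - x\<^sup>2)"
    unfolding cone_angle_def x_def[symmetric] using x by (intro cos_arcsin) auto
  have "sqrt (1 - x\<^sup>2) > 0" using x by (simp add: power_less_one_iff)
  then have bound_pos: "norm (w - v) * norm v * sqrt (1 - x\<^sup>2) > 0"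
    using assms(4) \<open>norm v > 0\<close> by simp
  have cone: "(w - v) \<bullet> v \<ge> norm (w - v) * norm v * sqrt (1 - x\<^sup>2)"
    using assms(3) cos_eq by (simp add: mem_cone_plus_iff)
  then show "(w - v) \<bullet> v > 0" using bound_pos by linarith
  have "(norm (w - v))\<^sup>2 * ((norm v)\<^sup>2 - r\<^sup>2) = (norm (w - v))\<^sup>2 * (norm v)\<^sup>2 * (1 - x\<^sup>2)"
    using \<open>norm v > 0\<close> by (simp add: x_def field_simps power2_eq_square)
  also have "\<dots> = (norm (w - v) * norm v * sqrt (1 - x\<^sup>2))\<^sup>2"
    using x power_le_one[of x 2] by (simp add: power_mult_distrib)
  also have "\<dots> \<le> ((w - v) \<bullet> v)\<^sup>2"
    using cone bound_pos by (intro power_mono) auto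
  finally show "(norm (w - v))\<^sup>2 * ((norm v)\<^sup>2 - r\<^sup>2) \<le> ((w - v) \<bullet> v)\<^sup>2" .
qed

lemma ray_meets_sphere:
  fixes v \<xi> :: "'a::real_inner"
  assumes "0 < r" "r < norm v" "\<xi> \<bullet> v > 0"
    and "(norm \<xi>)\<^sup>2 * ((norm v)\<^sup>2 - r\<^sup>2) \<le> (\<xi> \<bullet> v)\<^sup>2"
  shows "\<exists>t>0. norm (v - t *\<^sub>R \<xi>) = r"
proof -
  have "\<xi> \<noteq> 0" using assms(3) by auto
  then have norm_pos: "(norm \<xi>)\<^sup>2 > 0" by simp
  define t\<^sub>0 where "t\<^sub>0 = (\<xi> \<bullet> v) / (norm \<xi>)\<^sup>2"
  have "t\<^sub>0 > 0" using assms(3) norm_pos by (simp add: t\<^sub>0_def)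
  have "(norm (v - t\<^sub>0 *\<^sub>R \<xi>))\<^sup>2 = (norm v)\<^sup>2 - 2 * t\<^sub>0 * (\<xi> \<bullet> v) + t\<^sub>0\<^sup>2 * (norm \<xi>)\<^sup>2"
    unfolding power2_norm_eq_inner
    by (simp add: inner_diff_left inner_diff_right algebra_simps power2_eq_square inner_commute)
  also have "\<dots> = (norm v)\<^sup>2 - (\<xi> \<bullet> v)\<^sup>2 / (norm \<xi>)\<^sup>2"
    using norm_pos by (simp add: t\<^sub>0_def field_simps power2_eq_square)
  also have "\<dots> \<le> r\<^sup>2"
    using assms(4) norm_pos by (simp add: field_simps)
  finally have "norm (v - t\<^sub>0 *\<^sub>R \<xi>) \<le> r"
    using assms(1) by (simp add: power2_le_iff_abs_le)
  then have "\<exists>t. 0 \<le> t \<and> t \<le> t\<^sub>0 \<and> norm (v - t *\<^sub>R \<xi>) = r"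
    using assms(2) \<open>t\<^sub>0 > 0\<close> by (intro IVT2') (auto intro!: continuous_intros)
  then obtain t where "0 \<le> t" "norm (v - t *\<^sub>R \<xi>) = r"
    by blast
  moreover have "t \<noteq> 0" using calculation assms(2) by auto
  ultimately show ?thesis by (auto intro!: exI[of _ t])
qed

lemma cone_plus_segment_from_sphere:
  fixes v w :: "'a::euclidean_space"
  assumes "0 < r" "r < norm v" "w \<in> cone_plus r v" "w \<noteq> v"
  shows "\<exists>u. norm u = r \<and> v \<in> open_segment u w"
proof -
  obtain t where "t > 0" and u_norm: "norm (v - t *\<^sub>R (w - v)) = r"
    using ray_meets_sphere cone_plus_inner_bounds[OF assms] assms(1,2) by blast
  define u where "u = v - t *\<^sub>R (w - v)"
  have w_minus_u: "w - u = (1 + t) *\<^sub>R (w - v)"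
    by (simp add: u_def algebra_simps)
  have "v = (1 - t / (1 + t)) *\<^sub>R u + (t / (1 + t)) *\<^sub>R w"
  proof -
    have "(1 - t / (1 + t)) *\<^sub>R u + (t / (1 + t)) *\<^sub>R w = u + (t / (1 + t)) *\<^sub>R (w - u)"
      by (simp add: algebra_simps)
    also have "\<dots> = u + t *\<^sub>R (w - v)"
      using \<open>t > 0\<close> by (simp add: w_minus_u)
    also have "\<dots> = v"
      by (simp add: u_def)
    finally show ?thesis ..
  qed
  moreover have "u \<noteq> w"
    using w_minus_u \<open>t > 0\<close> assms(4) by (metis eq_iff_diff_eq_0 scaleR_eq_0_iff add_pos_pos zero_less_one less_irrefl)
  ultimately have "v \<in> open_segment u w"
    using \<open>t > 0\<close> by (auto simp: in_segment intro!: exI[of _ "t / (1 + t)"])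
  with u_norm show ?thesis
    by (auto simp: u_def)
qed

lemma deriv_pos_of_convex_increase:
  fixes \<phi> \<phi>' \<phi>'' :: "real \<Rightarrow> real"
  assumes "a < c" "c < b" "\<phi> a < \<phi> c"
    and \<phi>': "\<And>s. s \<in> {a..b} \<Longrightarrow> (\<phi> has_real_derivative \<phi>' s) (at s)"
    and \<phi>'': "\<And>s. s \<in> {a..b} \<Longrightarrow> (\<phi>' has_real_derivative \<phi>'' s) (at s)"
    and \<phi>''_nonneg: "\<And>s. s \<in> {a..b} \<Longrightarrow> \<phi>'' s \<ge> 0"
  shows "\<phi>' b > 0"
proof -
  obtain z where z: "a < z" "z < c" "\<phi> c - \<phi> a = (c - a) * \<phi>' z"
    using MVT2[of a c \<phi> \<phi>'] \<phi>' assms(1,2) by fastforce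
  have "(c - a) * \<phi>' z > 0"
    using z assms(3) by simp
  then have "\<phi>' z > 0"
    using assms(1) by (simp add: zero_less_mult_iff)
  moreover obtain y where y: "z < y" "y < b" "\<phi>' b - \<phi>' z = (b - z) * \<phi>'' y"
    using MVT2[of z b \<phi>' \<phi>''] \<phi>'' z assms(2) by fastforce
  moreover have "\<phi>'' y \<ge> 0"
    using \<phi>''_nonneg y z assms(1) by simp
  ultimately show ?thesis
    by (smt (verit, best) mult_nonneg_nonneg)
qed

lemma inner_gradient_pos_beyond_increase:
  fixes F :: "'a::real_inner \<Rightarrow> real"
  assumes "convex K" "u \<in> K" "w \<in> K"
    and grad: "\<And>x. x \<in> K \<Longrightarrow> (F has_derivative (\<lambda>h. G x \<bullet> h)) (at x)"
    and hess: "\<And>x. x \<in> K \<Longrightarrow> (G has_derivative H x) (at x)"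
    and psd: "\<And>x h. x \<in> K \<Longrightarrow> H x h \<bullet> h \<ge> 0"
    and v: "v \<in> open_segment u w" and increase: "F u < F v"
  shows "G w \<bullet> (w - v) > 0"
proof -
  obtain l where l: "0 < l" "l < 1" and v_eq: "v = u + l *\<^sub>R (w - u)"
    using v by (auto simp: in_segment algebra_simps)
  define \<xi> where "\<xi> = w - u"
  define p where "p s = u + s *\<^sub>R \<xi>" for s
  have p_in: "p s \<in> K" if "s \<in> {0..1}" for s
    using \<open>convex K\<close> \<open>u \<in> K\<close> \<open>w \<in> K\<close> that
    by (auto simp: p_def \<xi>_def convex_alt algebra_simps dest: spec[of _ s])
  have p_deriv: "(p has_derivative (\<lambda>h. h *\<^sub>R \<xi>)) (at s)" for s
    unfolding p_def by (auto intro!: derivative_eq_intros)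
  have first: "((\<lambda>s. F (p s)) has_real_derivative G (p s) \<bullet> \<xi>) (at s)" if "s \<in> {0..1}" for s
    using has_derivative_compose[OF p_deriv grad[OF p_in[OF that]]]
    by (auto intro: has_derivative_imp_has_field_derivative)
  have second: "((\<lambda>s. G (p s) \<bullet> \<xi>) has_real_derivative H (p s) \<xi> \<bullet> \<xi>) (at s)"
    if "s \<in> {0..1}" for s
  proof -
    have "linear (H (p s))"
      using hess[OF p_in[OF that]] has_derivative_linear by blast
    then show ?thesis
      using has_derivative_inner_left[OF has_derivative_compose[OF p_deriv hess[OF p_in[OF that]]]]
      by (auto intro: has_derivative_imp_has_field_derivative simp: linear_scale)
  qed
  have "F (p 0) < F (p l)"
    using increase by (simp add: p_def v_eq \<xi>_def)
  then have "G (p 1) \<bullet> \<xi> > 0"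
    using deriv_pos_of_convex_increase[OF l _ first second] psd p_in by simp
  moreover have "w - v = (1 - l) *\<^sub>R \<xi>"
    by (simp add: v_eq \<xi>_def algebra_simps)
  ultimately show ?thesis
    using l by (simp add: p_def \<xi>_def)
qed

lemma gradient_add_half_norm_sq:
  fixes f :: "'a::real_inner \<Rightarrow> real"
  assumes "(f has_derivative (\<lambda>h. Df \<bullet> h)) (at x)"
  shows "((\<lambda>y. f y + M / 2 * (norm y)\<^sup>2) has_derivative (\<lambda>h. (Df + M *\<^sub>R x) \<bullet> h)) (at x)"
proof -
  have "((\<lambda>y. f y + M / 2 * (y \<bullet> y)) has_derivative
      (\<lambda>h. Df \<bullet> h + M / 2 * (x \<bullet> h + h \<bullet> x))) (at x)"
    using assms by (auto intro!: derivative_eq_intros)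
  then show ?thesis
    unfolding power2_norm_eq_inner
    by (rule has_derivative_eq_rhs) (auto simp: fun_eq_iff inner_add_left inner_commute algebra_simps)
qed

lemma le_SUP_if_continuous_compact:
  fixes f :: "'a::topological_space \<Rightarrow> real"
  assumes "continuous_on S f" "compact S" "x \<in> S"
  shows "f x \<le> (SUP y\<in>S. f y)"
  using assms by (intro cSUP_upper bounded_imp_bdd_above compact_imp_bounded compact_continuous_image)

theorem lemma2p4:
  fixes K :: "'a::euclidean_space set"
    and f :: "'a \<Rightarrow> real" and Df :: "'a \<Rightarrow> 'a" and D2f :: "'a \<Rightarrow> 'a \<Rightarrow> 'a"
    and M :: real and g :: "'a \<Rightarrow> real" and f0 :: "'a \<Rightarrow> real"
    and r0 \<mu>0 \<mu>1 s0 :: real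
  assumes K_open: "open K" and K_bounded: "bounded K" and K_convex: "convex K"
    and K_0: "0 \<in> K"
    \<comment> \<open>f is C^2 on K with gradient Df and Hessian D2f\<close>
    and f_grad: "\<And>x. x \<in> K \<Longrightarrow> (f has_derivative (\<lambda>h. Df x \<bullet> h)) (at x)"
    and f_hess: "\<And>x. x \<in> K \<Longrightarrow> (Df has_derivative D2f x) (at x)"
    and f_hess_cont: "\<And>h. continuous_on K (\<lambda>x. D2f x h)"
    \<comment> \<open>D^2 f \<ge> - M I\<close>
    and M_nonneg: "M \<ge> 0"
    and f_hess_bound: "\<And>x h. x \<in> K \<Longrightarrow> D2f x h \<bullet> h \<ge> - M * (norm h)\<^sup>2"
    \<comment> \<open>f(v) \<rightarrow> \<infinity> as v \<rightarrow> boundary of K within K\<close>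
    and f_blowup: "\<And>b. b \<in> frontier K \<Longrightarrow> filterlim f at_top (at b within K)"
    and f0_def: "\<And>v. f0 v = f v + M / 2 * (norm v)\<^sup>2"
    \<comment> \<open>g : S^{q-1} \<rightarrow> (0,\<infinity>) Lipschitz, \<nu> \<mapsto> g(\<nu>)\<nu> parametrizes the boundary\<close>
    and g_pos: "\<And>\<nu>. \<nu> \<in> sphere 0 1 \<Longrightarrow> g \<nu> > 0"
    and g_lip: "\<exists>L. lipschitz_on L (sphere 0 1) g"
    and g_param: "frontier K = (\<lambda>\<nu>. g \<nu> *\<^sub>R \<nu>) ` sphere 0 1"
    \<comment> \<open>choice of r0, \<mu>0, s0, \<mu>1\<close>
    and r0_pos: "r0 > 0" and \<mu>0_range: "0 < \<mu>0" "\<mu>0 < 1"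
    and ball_in_Y: "cball 0 r0 \<subseteq> Yset g \<mu>0"
    and s0_def: "s0 = (SUP v\<in>sphere 0 r0. f0 v)"
    and \<mu>1_range: "\<mu>0 < \<mu>1" "\<mu>1 < 1"
    and \<mu>1_prop: "\<And>v. v \<in> K - Yset g \<mu>1 \<Longrightarrow> f0 v \<ge> 1 + s0"
    and v_in: "v \<in> K - Yset g \<mu>1"
    and w_in: "w \<in> cone_plus r0 v \<inter> K" and w_ne: "w \<noteq> v"
  shows "(Df w + M *\<^sub>R w) \<bullet> (w - v) > 0"
proof -
  have "Yset g \<mu>0 \<subseteq> K"
    using Yset_subset K_open K_convex K_0 g_pos g_param \<mu>0_range by (metis less_imp_le)
  then have cball_in_K: "cball 0 r0 \<subseteq> K"
    using ball_in_Y by blast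
  have "r0 < norm v"
    using ball_in_Y Yset_mono[of \<mu>0 \<mu>1 g] \<mu>1_range v_in by (force simp: subset_iff)
  then obtain u where u: "norm u = r0" "v \<in> open_segment u w"
    using cone_plus_segment_from_sphere r0_pos w_in w_ne by blast
  have "f0 = (\<lambda>y. f y + M / 2 * (norm y)\<^sup>2)"
    using f0_def by (simp add: fun_eq_iff)
  then have grad: "(f0 has_derivative (\<lambda>h. (Df x + M *\<^sub>R x) \<bullet> h)) (at x)" if "x \<in> K" for x
    using gradient_add_half_norm_sq[OF f_grad[OF that]] by simp
  then have "continuous_on K f0"
    by (blast intro: continuous_at_imp_continuous_on has_derivative_continuous)
  then have "continuous_on (sphere 0 r0) f0"
    using cball_in_K sphere_cball continuous_on_subset by blast
  then have increase: "f0 u < f0 v"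
    using le_SUP_if_continuous_compact[of "sphere 0 r0" f0 u] u(1) \<mu>1_prop[OF v_in] s0_def by simp
  have hess: "((\<lambda>y. Df y + M *\<^sub>R y) has_derivative (\<lambda>h. D2f x h + M *\<^sub>R h)) (at x)"
    if "x \<in> K" for x
    using f_hess[OF that] by (auto intro!: derivative_eq_intros)
  have psd: "(D2f x h + M *\<^sub>R h) \<bullet> h \<ge> 0" if "x \<in> K" for x h
    using f_hess_bound[OF that, of h] by (simp add: inner_add_left power2_norm_eq_inner)
  have "u \<in> K"
    using u(1) cball_in_K by auto
  then show ?thesis
    using inner_gradient_pos_beyond_increase[OF K_convex _ _ grad hess psd u(2) increase] w_in
    by blast
qed

end
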